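(* Let $n\geq 2$ be an integer, and for $\alpha\in\mathbb{Q}$ let $s_{n,\alpha}=1+i\frac{\pi\alpha}{\log n}$. Then $\{\kappa_{s_{n,\alpha}}\}_{\alpha\in\mathbb{Q}}$ spans a dense subspace of $H^2$.
   Context: $H^2$ denotes the Hardy space of analytic functions $f(z)=\sum_{k\ge0}\hat f(k)z^k$ on the open unit disk with $\sum_{k}|\hat f(k)|^2<\infty$. For $s\in\mathbb{C}\setminus\{0\}$ set $\varphi_0(s)=-\frac1s$ and $\varphi_k(s)=-\frac1s\left((k+1)^{1-s}-k^{1-s}\right)$ for $k\geq1$. For $\Re s>1/2$ the zeta kernel is $\kappa_s(z)=\sum_{k=0}^\infty\varphi_k(\bar s)z^k\in H^2$; equivalently $\langle f,\kappa_s\rangle=\Lambda^{(s)}(f)$ where $\Lambda^{(s)}$ is the bounded linear functional on $H^2$ with $\Lambda^{(s)}(z^k)=\varphi_k(s)$. *)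

theory Defs
  imports "HOL-Analysis.Analysis"
begin

text \<open>H^2 is represented by the Taylor coefficient sequences f(z) = sum_k a_k z^k:
  the map f -> (hat f(k))_k is the standard isometric identification of H^2 with l^2(N).\<close>

definition H2 :: "(nat \<Rightarrow> complex) set" where
  "H2 = {a. summable (\<lambda>k. (cmod (a k))^2)}"

definition H2_norm :: "(nat \<Rightarrow> complex) \<Rightarrow> real" where
  "H2_norm a = sqrt (\<Sum>k. (cmod (a k))^2)"

definition phi :: "nat \<Rightarrow> complex \<Rightarrow> complex" where
  "phi k s = (if k = 0 then - 1 / s
              else - (1 / s) * (of_nat (k+1) powr (1 - s) - of_nat k powr (1 - s)))"

definition kappa :: "complex \<Rightarrow> nat \<Rightarrow> complex" where
  "kappa s = (\<lambda>k. phi k (cnj s))"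

definition s_param :: "nat \<Rightarrow> rat \<Rightarrow> complex" where
  "s_param n \<alpha> = 1 + \<i> * of_real (pi * of_rat \<alpha> / ln (real n))"

end

theory Submission
  imports Defs "HOL-Complex_Analysis.Complex_Analysis"
begin

(*
  If the kernels did not span a dense subspace, the projection theorem in H^2 would give a
  nonzero g orthogonal to all of them. For h = conj g the series G(s) = sum_k h_k phi_k(s) is
  holomorphic on Re s > 1/2 and G(conj s) = conj <g, kappa_s>, so G vanishes at the points
  1 - i pi alpha / log n, which accumulate at 1; hence G = 0. At s = y + 1, summation by parts
  turns G into the Dirichlet series sum_k (h_k - h_{k+1}) (k+1)^(-y), whose vanishing for all
  y >= 2 forces h_k = h_{k+1}. A constant square-summable sequence is 0, so g = 0.
*)

section \<open>The Hardy space as a Hilbert space\<close>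

lemma H2_add:
  assumes "a \<in> H2" "b \<in> H2" shows "(\<lambda>k. a k + b k) \<in> H2"
proof -
  have bound: "(cmod (a k + b k))\<^sup>2 \<le> 2 * (cmod (a k))\<^sup>2 + 2 * (cmod (b k))\<^sup>2" for k
  proof -
    have "(cmod (a k + b k))\<^sup>2 \<le> (cmod (a k) + cmod (b k))\<^sup>2"
      by (simp add: norm_triangle_ineq power_mono)
    also have "\<dots> \<le> 2 * (cmod (a k))\<^sup>2 + 2 * (cmod (b k))\<^sup>2"
      using sum_squares_bound[of "cmod (a k)" "cmod (b k)"] by (simp add: power2_sum)
    finally show ?thesis .
  qed
  have "summable (\<lambda>k. 2 * (cmod (a k))\<^sup>2 + 2 * (cmod (b k))\<^sup>2)"
    using assms by (simp add: H2_def summable_add summable_mult)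
  then show ?thesis
    unfolding H2_def by (simp add: summable_comparison_test'[where N = 0] bound)
qed

lemma H2_scale: "a \<in> H2 \<Longrightarrow> (\<lambda>k. c * a k) \<in> H2"
  by (simp add: H2_def norm_mult power_mult_distrib summable_mult)

lemma H2_inner_summable:
  assumes "a \<in> H2" "b \<in> H2" shows "summable (\<lambda>k. a k * cnj (b k))"
proof (rule summable_norm_cancel, rule summable_comparison_test'[where N = 0])
  show "summable (\<lambda>k. ((cmod (a k))\<^sup>2 + (cmod (b k))\<^sup>2) / 2)"
    using assms by (auto simp: H2_def intro!: summable_add summable_divide)
  show "norm (norm (a k * cnj (b k))) \<le> ((cmod (a k))\<^sup>2 + (cmod (b k))\<^sup>2) / 2" for k
    using sum_squares_bound[of "cmod (a k)" "cmod (b k)"] by (simp add: norm_mult)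
qed

lemma Re_mult_cnj_self: "Re (z * cnj z) = (cmod z)\<^sup>2"
  using cmod_power2[of z] by (simp add: power2_eq_square)

typedef ell2 = H2 morphisms ell2_coeff Abs_ell2
  by (rule exI[of _ "\<lambda>k. 0"]) (simp add: H2_def)

setup_lifting type_definition_ell2

instantiation ell2 :: real_vector
begin

lift_definition zero_ell2 :: ell2 is "\<lambda>k. 0"
  by (simp add: H2_def)

lift_definition plus_ell2 :: "ell2 \<Rightarrow> ell2 \<Rightarrow> ell2" is "\<lambda>a b k. a k + b k"
  by (rule H2_add)

lift_definition uminus_ell2 :: "ell2 \<Rightarrow> ell2" is "\<lambda>a k. - a k"
  by (simp add: H2_def)

lift_definition minus_ell2 :: "ell2 \<Rightarrow> ell2 \<Rightarrow> ell2" is "\<lambda>a b k. a k - b k"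
  using H2_add[OF _ H2_scale, of _ _ "-1"] by simp

lift_definition scaleR_ell2 :: "real \<Rightarrow> ell2 \<Rightarrow> ell2" is "\<lambda>r a k. of_real r * a k"
  by (rule H2_scale)

instance
proof
  fix a b :: real and x y z :: ell2
  show "x + y + z = x + (y + z)" by transfer (simp add: add.assoc)
  show "x + y = y + x" by transfer (simp add: add.commute)
  show "0 + x = x" by transfer simp
  show "- x + x = 0" by transfer simp
  show "x - y = x + - y" by transfer simp
  show "a *\<^sub>R (x + y) = a *\<^sub>R x + a *\<^sub>R y" by transfer (simp add: distrib_left)
  show "(a + b) *\<^sub>R x = a *\<^sub>R x + b *\<^sub>R x" by transfer (simp add: distrib_right)
  show "a *\<^sub>R b *\<^sub>R x = (a * b) *\<^sub>R x" by transfer (simp add: mult.assoc)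
  show "1 *\<^sub>R x = x" by transfer simp
qed

end

text \<open>Only the real structure of \<open>H\<^sup>2\<close> is made into a type class instance: the real inner
  product is the real part of the complex one, and complex scalars act through \<open>cscale\<close>.\<close>

instantiation ell2 :: real_inner
begin

lift_definition inner_ell2 :: "ell2 \<Rightarrow> ell2 \<Rightarrow> real" is "\<lambda>a b. \<Sum>k. Re (a k * cnj (b k))" .

definition norm_ell2 :: "ell2 \<Rightarrow> real" where
  "norm_ell2 x = sqrt (inner x x)"

definition sgn_ell2 :: "ell2 \<Rightarrow> ell2" where
  "sgn_ell2 x = x /\<^sub>R norm x"

definition dist_ell2 :: "ell2 \<Rightarrow> ell2 \<Rightarrow> real" where
  "dist_ell2 x y = norm (x - y)"

definition uniformity_ell2 :: "(ell2 \<times> ell2) filter" where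
  "uniformity_ell2 = (INF e\<in>{0<..}. principal {(x, y). dist x y < e})"

definition open_ell2 :: "ell2 set \<Rightarrow> bool" where
  "open_ell2 U \<longleftrightarrow> (\<forall>x\<in>U. \<forall>\<^sub>F (x', y) in uniformity. x' = x \<longrightarrow> y \<in> U)"

instance
proof
  fix x y z :: ell2 and r :: real
  show "inner x y = inner y x"
    by transfer (simp add: mult.commute)
  show "inner (x + y) z = inner x z + inner y z"
    by transfer (simp only: distrib_right plus_complex.sel suminf_add summable_Re H2_inner_summable)
  show "inner (r *\<^sub>R x) y = r * inner x y"
  proof transfer
    fix r :: real and a b :: "nat \<Rightarrow> complex"
    assume "a \<in> H2" "b \<in> H2"
    moreover have "Re (of_real r * z) = r * Re z" for z
      by simp
    ultimately show "(\<Sum>k. Re (of_real r * a k * cnj (b k))) = r * (\<Sum>k. Re (a k * cnj (b k)))"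
      by (simp only: mult.assoc suminf_mult summable_Re H2_inner_summable)
  qed
  show "0 \<le> inner x x"
    by transfer (simp only: Re_mult_cnj_self, simp add: H2_def suminf_nonneg)
  show "inner x x = 0 \<longleftrightarrow> x = 0"
    by transfer (simp only: Re_mult_cnj_self, simp add: H2_def suminf_eq_zero_iff fun_eq_iff)
  show "norm x = sqrt (inner x x)" by (fact norm_ell2_def)
  show "sgn x = x /\<^sub>R norm x" by (fact sgn_ell2_def)
  show "dist x y = norm (x - y)" by (fact dist_ell2_def)
qed (fact uniformity_ell2_def open_ell2_def)+

end

lift_definition cscale :: "complex \<Rightarrow> ell2 \<Rightarrow> ell2" is "\<lambda>c a k. c * a k"
  by (rule H2_scale)

definition cinner :: "ell2 \<Rightarrow> ell2 \<Rightarrow> complex" where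
  "cinner x y = (\<Sum>k. ell2_coeff x k * cnj (ell2_coeff y k))"

lemma ell2_coeff_diff: "ell2_coeff (x - y) k = ell2_coeff x k - ell2_coeff y k"
  by transfer simp

lemma ell2_coeff_cscale: "ell2_coeff (cscale c x) k = c * ell2_coeff x k"
  by transfer simp

lemma ell2_coeff_sum: "ell2_coeff (\<Sum>i\<in>A. x i) k = (\<Sum>i\<in>A. ell2_coeff (x i) k)"
  by (induction A rule: infinite_finite_induct) (simp_all add: zero_ell2.rep_eq plus_ell2.rep_eq)

lemma summable_ell2_coeff: "summable (\<lambda>k. (cmod (ell2_coeff x k))\<^sup>2)"
  using ell2_coeff[of x] by (simp add: H2_def)

lemma norm_ell2_eq: "norm x = sqrt (\<Sum>k. (cmod (ell2_coeff x k))\<^sup>2)"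
  by (simp only: norm_ell2_def inner_ell2.rep_eq Re_mult_cnj_self)

lemma power2_norm_ell2: "(norm x)\<^sup>2 = (\<Sum>k. (cmod (ell2_coeff x k))\<^sup>2)"
  by (simp add: norm_ell2_eq suminf_nonneg summable_ell2_coeff)

lemma H2_norm_ell2_coeff: "H2_norm (ell2_coeff x) = norm x"
  by (simp add: H2_norm_def norm_ell2_eq)

lemma sum_coeff_le_norm: "finite K \<Longrightarrow> (\<Sum>k\<in>K. (cmod (ell2_coeff x k))\<^sup>2) \<le> (norm x)\<^sup>2"
  unfolding power2_norm_ell2 by (simp add: sum_le_suminf summable_ell2_coeff)

lemma inner_eq_Re_cinner: "inner x y = Re (cinner x y)"
  by (simp add: cinner_def inner_ell2.rep_eq Re_suminf H2_inner_summable ell2_coeff)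

lemma inner_cscale_ii_right: "inner x (cscale \<i> y) = Im (cinner x y)"
proof -
  have "(\<Sum>k. ell2_coeff x k * cnj (ell2_coeff (cscale \<i> y) k))
      = (\<Sum>k. - \<i> * (ell2_coeff x k * cnj (ell2_coeff y k)))"
    by (simp add: ell2_coeff_cscale mult.left_commute)
  also have "\<dots> = - \<i> * cinner x y"
    unfolding cinner_def by (rule suminf_mult[OF H2_inner_summable[OF ell2_coeff ell2_coeff]])
  finally show ?thesis
    by (simp add: inner_eq_Re_cinner cinner_def)
qed

lemma cinner_eq_0_iff: "cinner x y = 0 \<longleftrightarrow> inner x y = 0 \<and> inner x (cscale \<i> y) = 0"
  unfolding inner_cscale_ii_right by (simp add: inner_eq_Re_cinner complex_eq_iff)

lemma norm_ell2_coeff_le: "cmod (ell2_coeff x k) \<le> norm x"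
proof -
  have "(cmod (ell2_coeff x k))\<^sup>2 \<le> (norm x)\<^sup>2"
    using sum_coeff_le_norm[of "{k}" x] by simp
  then show ?thesis
    using power2_le_imp_le by simp
qed

lemma bounded_linear_ell2_coeff: "bounded_linear (\<lambda>x. ell2_coeff x k)"
proof (rule bounded_linear_intro[where K = 1])
  fix x y :: ell2 and r :: real
  show "ell2_coeff (x + y) k = ell2_coeff x k + ell2_coeff y k"
    by transfer simp
  show "ell2_coeff (r *\<^sub>R x) k = r *\<^sub>R ell2_coeff x k"
    by transfer (simp add: scaleR_conv_of_real)
  show "norm (ell2_coeff x k) \<le> norm x * 1"
    using norm_ell2_coeff_le by simp
qed

lemma ell2_Cauchy_tail:
  assumes X: "Cauchy X" and p: "\<And>k. (\<lambda>n. ell2_coeff (X n) k) \<longlonglongrightarrow> p k" and "0 < e"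
  obtains N where "\<And>m. m \<ge> N \<Longrightarrow> (\<lambda>k. ell2_coeff (X m) k - p k) \<in> H2"
    and "\<And>m. m \<ge> N \<Longrightarrow> (\<Sum>k. (cmod (ell2_coeff (X m) k - p k))\<^sup>2) \<le> e\<^sup>2"
proof -
  obtain N where N: "\<forall>m\<ge>N. \<forall>n\<ge>N. dist (X m) (X n) < e"
    using metric_CauchyD[OF X \<open>0 < e\<close>] by blast
  have partial: "(\<Sum>k<M. (cmod (ell2_coeff (X m) k - p k))\<^sup>2) \<le> e\<^sup>2" if "m \<ge> N" for m M
  proof (rule LIMSEQ_le_const2)
    show "(\<lambda>n. \<Sum>k<M. (cmod (ell2_coeff (X m) k - ell2_coeff (X n) k))\<^sup>2)
            \<longlonglongrightarrow> (\<Sum>k<M. (cmod (ell2_coeff (X m) k - p k))\<^sup>2)"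
      by (intro tendsto_intros p)
    have "(\<Sum>k<M. (cmod (ell2_coeff (X m) k - ell2_coeff (X n) k))\<^sup>2) \<le> e\<^sup>2" if "n \<ge> N" for n
    proof -
      have "norm (X m - X n) \<le> e"
        using N \<open>m \<ge> N\<close> that by (simp add: dist_norm less_imp_le)
      then have "(norm (X m - X n))\<^sup>2 \<le> e\<^sup>2"
        by (simp add: power_mono)
      then show ?thesis
        using sum_coeff_le_norm[of "{..<M}" "X m - X n"] by (simp add: ell2_coeff_diff)
    qed
    then show "\<exists>N. \<forall>n\<ge>N. (\<Sum>k<M. (cmod (ell2_coeff (X m) k - ell2_coeff (X n) k))\<^sup>2) \<le> e\<^sup>2"
      by blast
  qed
  have summable: "summable (\<lambda>k. (cmod (ell2_coeff (X m) k - p k))\<^sup>2)" if "m \<ge> N" for m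
    by (rule summableI_nonneg_bounded[OF _ partial[OF that]]) simp
  show ?thesis
  proof (rule that)
    show "(\<lambda>k. ell2_coeff (X m) k - p k) \<in> H2" if "m \<ge> N" for m
      using summable[OF that] by (simp add: H2_def)
    show "(\<Sum>k. (cmod (ell2_coeff (X m) k - p k))\<^sup>2) \<le> e\<^sup>2" if "m \<ge> N" for m
      by (rule suminf_le_const[OF summable[OF that] partial[OF that]])
  qed
qed

instance ell2 :: complete_space
proof
  fix X :: "nat \<Rightarrow> ell2"
  assume X: "Cauchy X"
  define p where "p k = lim (\<lambda>n. ell2_coeff (X n) k)" for k
  have p: "(\<lambda>n. ell2_coeff (X n) k) \<longlonglongrightarrow> p k" for k
    using bounded_linear.Cauchy[OF bounded_linear_ell2_coeff X]
    by (simp add: p_def Cauchy_convergent_iff convergent_LIMSEQ_iff)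
  obtain N where "(\<lambda>k. ell2_coeff (X N) k - p k) \<in> H2"
    using ell2_Cauchy_tail[OF X p zero_less_one] by blast
  from H2_add[OF ell2_coeff[of "X N"] H2_scale[OF this, of "-1"]] have "p \<in> H2"
    by simp
  have "X \<longlonglongrightarrow> Abs_ell2 p"
  proof (rule metric_LIMSEQ_I)
    fix r :: real assume "0 < r"
    then have "0 < r/2" by simp
    then obtain N where N: "\<And>m. m \<ge> N \<Longrightarrow> (\<Sum>k. (cmod (ell2_coeff (X m) k - p k))\<^sup>2) \<le> (r/2)\<^sup>2"
      using ell2_Cauchy_tail[OF X p] by blast
    have "dist (X m) (Abs_ell2 p) < r" if "m \<ge> N" for m
    proof -
      have "(dist (X m) (Abs_ell2 p))\<^sup>2 \<le> (r/2)\<^sup>2"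
        using N[OF that] \<open>p \<in> H2\<close> by (simp add: dist_norm power2_norm_ell2 ell2_coeff_diff Abs_ell2_inverse)
      then have "dist (X m) (Abs_ell2 p) \<le> r/2"
        by (rule power2_le_imp_le) (use \<open>0 < r\<close> in simp)
      then show ?thesis
        using \<open>0 < r\<close> by linarith
    qed
    then show "\<exists>N. \<forall>m\<ge>N. dist (X m) (Abs_ell2 p) < r"
      by blast
  qed
  then show "convergent X"
    by (rule convergentI)
qed

section \<open>Orthogonal complements\<close>

lemma inner_eq_0_if_norm_le_norm_diff_scaleR:
  fixes x y :: "'a::real_inner"
  assumes min: "\<And>t. norm x \<le> norm (x - t *\<^sub>R y)"
  shows "inner x y = 0"
proof (rule ccontr)
  assume nz: "inner x y \<noteq> 0"
  define c where "c = (norm y)\<^sup>2 + 1"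
  define t where "t = inner x y / c"
  have c: "c > 0"
    unfolding c_def using zero_le_power2[of "norm y"] by linarith
  have "(norm x)\<^sup>2 \<le> (norm (x - t *\<^sub>R y))\<^sup>2"
    using min[of t] by (simp add: power_mono)
  also have "\<dots> = (norm x)\<^sup>2 - 2 * t * inner x y + t\<^sup>2 * (norm y)\<^sup>2"
    unfolding power2_norm_eq_inner by (simp add: inner_diff inner_commute algebra_simps power2_eq_square)
  finally have "2 * t * inner x y \<le> t\<^sup>2 * (norm y)\<^sup>2"
    by linarith
  then have "2 * (inner x y)\<^sup>2 * c \<le> (inner x y)\<^sup>2 * (norm y)\<^sup>2"
    using c by (simp add: t_def power2_eq_square divide_simps)
  then have "2 * c \<le> (norm y)\<^sup>2"
    using nz by simp
  then show False
    unfolding c_def using zero_le_power2[of "norm y"] by (simp add: algebra_simps)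
qed

lemma minimizing_sequence_exists:
  assumes "A \<noteq> {}"
  obtains v where "\<And>j. v j \<in> A" "(\<lambda>j. dist f (v j)) \<longlonglongrightarrow> infdist f A"
proof -
  have "\<exists>v. v \<in> A \<and> dist f v < infdist f A + inverse (real (Suc j))" for j
    using cInf_lessD[of "dist f ` A" "infdist f A + inverse (real (Suc j))"] assms
    by (auto simp: infdist_notempty)
  then obtain v where v: "\<And>j. v j \<in> A" "\<And>j. dist f (v j) < infdist f A + inverse (real (Suc j))"
    by metis
  have "(\<lambda>j. dist f (v j)) \<longlonglongrightarrow> infdist f A"
  proof (rule tendsto_sandwich[OF _ _ tendsto_const])
    show "\<forall>\<^sub>F j in sequentially. infdist f A \<le> dist f (v j)"
      using v(1) by (intro always_eventually allI infdist_le)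
    show "\<forall>\<^sub>F j in sequentially. dist f (v j) \<le> infdist f A + inverse (real (Suc j))"
      using v(2) by (intro always_eventually allI less_imp_le)
    show "(\<lambda>j. infdist f A + inverse (real (Suc j))) \<longlonglongrightarrow> infdist f A"
      using tendsto_add[OF tendsto_const LIMSEQ_inverse_real_of_nat] by simp
  qed
  with v(1) show ?thesis
    using that by blast
qed

lemma minimizing_sequence_Cauchy:
  fixes f :: "'a::real_inner"
  assumes A: "convex A" "\<And>j. v j \<in> A" and d: "\<And>w. w \<in> A \<Longrightarrow> d \<le> dist f w"
    and v: "(\<lambda>j. dist f (v j)) \<longlonglongrightarrow> d"
  shows "Cauchy v"
proof (rule metric_CauchyI)
  fix \<epsilon> :: real assume "0 < \<epsilon>"
  have "0 \<le> d"
    using v by (rule LIMSEQ_le_const) simp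
  define \<delta> where "\<delta> j = (dist f (v j))\<^sup>2 - d\<^sup>2" for j
  have "\<delta> \<longlonglongrightarrow> 0"
    using tendsto_diff[OF tendsto_power[OF v, of 2] tendsto_const[of "d\<^sup>2"]] by (simp add: \<delta>_def[abs_def])
  moreover have "0 < \<epsilon>\<^sup>2 / 4"
    using \<open>0 < \<epsilon>\<close> by simp
  ultimately have "\<forall>\<^sub>F j in sequentially. \<delta> j < \<epsilon>\<^sup>2 / 4"
    by (rule order_tendstoD(2))
  then obtain N where N: "\<forall>j\<ge>N. \<delta> j < \<epsilon>\<^sup>2 / 4"
    by (auto simp: eventually_sequentially)
  have "dist (v i) (v j) < \<epsilon>" if "i \<ge> N" "j \<ge> N" for i j
  proof -
    have "d \<le> norm (f - ((1/2) *\<^sub>R v i + (1/2) *\<^sub>R v j))"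
      using d convexD[OF A(1) A(2) A(2), of "1/2" "1/2" i j] by (simp add: dist_norm)
    then have "d\<^sup>2 \<le> (norm (f - ((1/2) *\<^sub>R v i + (1/2) *\<^sub>R v j)))\<^sup>2"
      using \<open>0 \<le> d\<close> by (simp add: power_mono)
    moreover have "(dist (v i) (v j))\<^sup>2 = 2 * (dist f (v i))\<^sup>2 + 2 * (dist f (v j))\<^sup>2
        - 4 * (norm (f - ((1/2) *\<^sub>R v i + (1/2) *\<^sub>R v j)))\<^sup>2"
      unfolding dist_norm power2_norm_eq_inner by (simp add: inner_diff inner_add inner_commute algebra_simps)
    moreover have "\<delta> i < \<epsilon>\<^sup>2 / 4" "\<delta> j < \<epsilon>\<^sup>2 / 4"
      using N that by auto
    ultimately have "(dist (v i) (v j))\<^sup>2 < \<epsilon>\<^sup>2"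
      unfolding \<delta>_def by linarith
    then show ?thesis
      by (rule power_less_imp_less_base) (use \<open>0 < \<epsilon>\<close> in simp)
  qed
  then show "\<exists>N. \<forall>i\<ge>N. \<forall>j\<ge>N. dist (v i) (v j) < \<epsilon>"
    by blast
qed

lemma exists_orthogonal_if_far_from_subspace:
  fixes f :: "'a::{real_inner, complete_space}"
  assumes V: "subspace V" and e: "0 < e" and far: "\<And>v. v \<in> V \<Longrightarrow> e \<le> dist f v"
  obtains g where "g \<noteq> 0" "\<And>v. v \<in> V \<Longrightarrow> inner g v = 0"
proof -
  define d where "d = infdist f V"
  have "V \<noteq> {}"
    using subspace_0[OF V] by blast
  have d_le: "d \<le> dist f v" if "v \<in> V" for v
    using that by (simp add: d_def infdist_le)
  obtain v where v: "\<And>j. v j \<in> V" "(\<lambda>j. dist f (v j)) \<longlonglongrightarrow> d"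
    using minimizing_sequence_exists[OF \<open>V \<noteq> {}\<close>] unfolding d_def by blast
  have "Cauchy v"
    by (rule minimizing_sequence_Cauchy[OF subspace_imp_convex[OF V] v(1) d_le v(2)])
  then obtain p where p: "v \<longlonglongrightarrow> p"
    using Cauchy_convergent_iff convergent_def by blast
  define g where "g = f - p"
  have "(\<lambda>j. dist f (v j)) \<longlonglongrightarrow> norm g"
    unfolding g_def dist_norm by (intro tendsto_intros p)
  with v(2) have "norm g = d"
    using LIMSEQ_unique by blast
  have lower: "d \<le> norm (g - t *\<^sub>R w)" if "w \<in> V" for w t
  proof (rule LIMSEQ_le_const)
    show "(\<lambda>j. dist f (v j + t *\<^sub>R w)) \<longlonglongrightarrow> norm (g - t *\<^sub>R w)"
      unfolding g_def dist_norm by (auto intro!: tendsto_eq_intros p simp: algebra_simps)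
    show "\<exists>N. \<forall>j\<ge>N. d \<le> dist f (v j + t *\<^sub>R w)"
      using d_le subspace_add[OF V v(1) subspace_scale[OF V that]] by blast
  qed
  have "e \<le> d"
    unfolding d_def infdist_notempty[OF \<open>V \<noteq> {}\<close>]
    by (rule cINF_greatest) (use \<open>V \<noteq> {}\<close> far in auto)
  then have "g \<noteq> 0"
    using \<open>norm g = d\<close> e by auto
  moreover have "inner g w = 0" if "w \<in> V" for w
    using lower[OF that] \<open>norm g = d\<close> by (intro inner_eq_0_if_norm_le_norm_diff_scaleR) simp
  ultimately show ?thesis
    using that by blast
qed

lemma cscale_add_left: "cscale (a + b) x = cscale a x + cscale b x"
  by transfer (simp add: distrib_right)

lemma cscale_zero_left: "cscale 0 x = 0"
  by transfer simp

lemma cscale_one: "cscale 1 x = x"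
  by transfer simp

lemma scaleR_cscale: "r *\<^sub>R cscale c x = cscale (of_real r * c) x"
  by transfer (simp add: mult.assoc)

definition complex_combinations :: "('i \<Rightarrow> ell2) \<Rightarrow> ell2 set" where
  "complex_combinations K = {\<Sum>i\<in>A. cscale (c i) (K i) | A c. finite A}"

lemma sum_cscale_extend:
  assumes "finite B" "A \<subseteq> B"
  shows "(\<Sum>i\<in>A. cscale (c i) (K i)) = (\<Sum>i\<in>B. cscale (if i \<in> A then c i else 0) (K i))"
  using assms by (intro sum.mono_neutral_cong_left) (auto simp: cscale_zero_left)

lemma subspace_complex_combinations: "subspace (complex_combinations K)"
proof (rule subspaceI)
  show "0 \<in> complex_combinations K"
    unfolding complex_combinations_def by (intro CollectI exI[of _ "{}"]) auto
next
  fix x y assume "x \<in> complex_combinations K" "y \<in> complex_combinations K"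
  then obtain A B c d where AB: "finite A" "finite B"
    and xy: "x = (\<Sum>i\<in>A. cscale (c i) (K i))" "y = (\<Sum>i\<in>B. cscale (d i) (K i))"
    unfolding complex_combinations_def by blast
  define e where "e i = (if i \<in> A then c i else 0) + (if i \<in> B then d i else 0)" for i
  have "x = (\<Sum>i\<in>A \<union> B. cscale (if i \<in> A then c i else 0) (K i))"
    unfolding xy using AB by (intro sum_cscale_extend) auto
  moreover have "y = (\<Sum>i\<in>A \<union> B. cscale (if i \<in> B then d i else 0) (K i))"
    unfolding xy using AB by (intro sum_cscale_extend) auto
  ultimately have "x + y = (\<Sum>i\<in>A \<union> B. cscale (e i) (K i))"
    by (simp only: e_def cscale_add_left sum.distrib)
  then show "x + y \<in> complex_combinations K"
    unfolding complex_combinations_def using AB by blast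
next
  fix r :: real and x assume "x \<in> complex_combinations K"
  then obtain A c where "finite A" "x = (\<Sum>i\<in>A. cscale (c i) (K i))"
    unfolding complex_combinations_def by blast
  then show "r *\<^sub>R x \<in> complex_combinations K"
    unfolding complex_combinations_def by (auto simp: scaleR_sum_right scaleR_cscale)
qed

lemma dist_sum_cscale_eq_H2_norm:
  assumes "f \<in> H2" "\<And>i. K i \<in> H2"
  shows "dist (Abs_ell2 f) (\<Sum>i\<in>A. cscale (c i) (Abs_ell2 (K i)))
    = H2_norm (\<lambda>k. f k - (\<Sum>i\<in>A. c i * K i k))"
proof -
  have "ell2_coeff (Abs_ell2 f - (\<Sum>i\<in>A. cscale (c i) (Abs_ell2 (K i))))
      = (\<lambda>k. f k - (\<Sum>i\<in>A. c i * K i k))"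
    using assms by (simp add: fun_eq_iff ell2_coeff_diff ell2_coeff_sum ell2_coeff_cscale Abs_ell2_inverse)
  then show ?thesis
    by (simp add: dist_norm flip: H2_norm_ell2_coeff)
qed

lemma H2_approximation_if_orthogonal_complement_trivial:
  assumes K: "\<And>i. K i \<in> H2" and complete: "\<And>g. (\<And>i. cinner g (Abs_ell2 (K i)) = 0) \<Longrightarrow> g = 0"
    and f: "f \<in> H2" and e: "0 < e"
  shows "\<exists>A c. finite A \<and> H2_norm (\<lambda>k. f k - (\<Sum>i\<in>A. c i * K i k)) < e"
proof (rule ccontr)
  define V where "V = complex_combinations (\<lambda>i. Abs_ell2 (K i))"
  assume "\<not> ?thesis"
  then have "e \<le> dist (Abs_ell2 f) v" if "v \<in> V" for v
    using that unfolding V_def complex_combinations_def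
    by (auto simp: dist_sum_cscale_eq_H2_norm[OF f K] not_less)
  then obtain g where "g \<noteq> 0" and g: "\<And>v. v \<in> V \<Longrightarrow> inner g v = 0"
    using exists_orthogonal_if_far_from_subspace[OF subspace_complex_combinations e]
    unfolding V_def by blast
  have mem: "cscale c (Abs_ell2 (K i)) \<in> V" for c i
    unfolding V_def complex_combinations_def by (intro CollectI exI[of _ "{i}"]) auto
  have "cinner g (Abs_ell2 (K i)) = 0" for i
    unfolding cinner_eq_0_iff using g[OF mem[of 1 i]] g[OF mem[of \<i> i]] by (simp add: cscale_one)
  with complete \<open>g \<noteq> 0\<close> show False
    by blast
qed

section \<open>The series \<open>\<Sum>\<^sub>k h\<^sub>k \<phi>\<^sub>k(s)\<close>\<close>

lemma norm_powr_Suc_diff_le: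
  fixes z :: complex
  assumes k: "k \<ge> 1" and z: "Re z \<le> 1"
  shows "cmod (of_nat (Suc k) powr z - of_nat k powr z) \<le> cmod z * real k powr (Re z - 1)"
proof -
  define S where "S = closed_segment (complex_of_real (real k)) (of_real (real (Suc k)))"
  have S: "\<exists>t. u = of_real t \<and> real k \<le> t" if "u \<in> S" for u
    using that unfolding S_def closed_segment_of_real by (auto simp: closed_segment_eq_real_ivl)
  have "((\<lambda>w. w powr z) has_field_derivative z * u powr (z - 1)) (at u within S)" if u: "u \<in> S" for u
  proof -
    obtain t where "u = of_real t" "real k \<le> t" using S[OF u] by blast
    then have "u \<notin> \<real>\<^sub>\<le>\<^sub>0" using k by (simp add: complex_nonpos_Reals_iff)
    then show ?thesis by (auto intro!: derivative_eq_intros)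
  qed
  moreover have "norm (z * u powr (z - 1)) \<le> cmod z * real k powr (Re z - 1)" if u: "u \<in> S" for u
  proof -
    obtain t where t: "u = of_real t" "real k \<le> t" using S[OF u] by blast
    then have "norm (u powr (z - 1)) = t powr (Re z - 1)"
      using k by (simp add: norm_powr_real_powr)
    also have "\<dots> \<le> real k powr (Re z - 1)"
      using k t z by (intro powr_mono2') auto
    finally show ?thesis
      by (simp add: norm_mult mult_left_mono)
  qed
  ultimately have "norm (of_real (real (Suc k)) powr z - complex_of_real (real k) powr z)
      \<le> cmod z * real k powr (Re z - 1) * norm (of_real (real (Suc k)) - complex_of_real (real k))"
    by (intro field_differentiable_bound[of S]) (auto simp: S_def)
  then show ?thesis by simp
qed

lemma norm_phi_le:
  assumes k: "k \<ge> 1" and s: "s \<noteq> 0" "0 \<le> Re s"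
  shows "cmod (phi k s) \<le> cmod (1 - s) / cmod s * real k powr (- Re s)"
proof -
  have "cmod (phi k s) = cmod (of_nat (Suc k) powr (1 - s) - of_nat k powr (1 - s)) / cmod s"
    using k by (simp add: phi_def norm_mult norm_divide)
  also have "\<dots> \<le> cmod (1 - s) * real k powr (Re (1 - s) - 1) / cmod s"
    using s by (intro divide_right_mono norm_powr_Suc_diff_le k) auto
  finally show ?thesis by simp
qed

lemma kappa_in_H2:
  assumes "1/2 < Re s"
  shows "kappa s \<in> H2"
proof -
  define C where "C = cmod (1 - cnj s) / cmod (cnj s)"
  have "s \<noteq> 0" using assms by auto
  have bound: "norm ((cmod (kappa s k))\<^sup>2) \<le> C\<^sup>2 * real k powr (- 2 * Re s)" if "k \<ge> 1" for k
  proof -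
    have "cmod (kappa s k) \<le> C * real k powr (- Re s)"
      using norm_phi_le[OF that, of "cnj s"] assms \<open>s \<noteq> 0\<close> by (simp add: kappa_def C_def)
    then have "(cmod (kappa s k))\<^sup>2 \<le> (C * real k powr (- Re s))\<^sup>2"
      by (simp add: power_mono)
    also have "\<dots> = C\<^sup>2 * real k powr (- 2 * Re s)"
      by (simp add: power_mult_distrib power2_eq_square powr_add[symmetric])
    finally show ?thesis by simp
  qed
  have "summable (\<lambda>k. C\<^sup>2 * real k powr (- 2 * Re s))"
    using assms by (intro summable_mult) (simp add: summable_real_powr_iff)
  from summable_comparison_test'[OF this bound] show ?thesis
    unfolding H2_def by simp
qed

lemma norm_phi_le_uniform:
  assumes k: "k \<ge> 1" and "0 < \<sigma>" "\<sigma> \<le> Re s" "cmod s \<le> R"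
  shows "cmod (phi k s) \<le> (1 + R) / \<sigma> * real k powr (- \<sigma>)"
proof -
  have "0 \<le> 1 + R"
    using assms norm_ge_zero[of s] by linarith
  have "cmod (1 - s) / cmod s \<le> (1 + R) / \<sigma>"
  proof (rule frac_le)
    show "cmod (1 - s) \<le> 1 + R"
      using assms norm_triangle_ineq4[of 1 s] by simp
    show "\<sigma> \<le> cmod s"
      using assms complex_Re_le_cmod[of s] by linarith
  qed (use \<open>0 \<le> 1 + R\<close> \<open>0 < \<sigma>\<close> in auto)
  moreover have "real k powr (- Re s) \<le> real k powr (- \<sigma>)"
    using assms by (intro powr_mono) auto
  ultimately have "cmod (1 - s) / cmod s * real k powr (- Re s) \<le> (1 + R) / \<sigma> * real k powr (- \<sigma>)"
    using \<open>0 \<le> 1 + R\<close> \<open>0 < \<sigma>\<close> by (intro mult_mono) auto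
  moreover have "cmod (phi k s) \<le> cmod (1 - s) / cmod s * real k powr (- Re s)"
    using assms by (intro norm_phi_le) auto
  ultimately show ?thesis
    by linarith
qed

lemma summable_H2_mult_powr:
  assumes "h \<in> H2" "1/2 < \<sigma>"
  shows "summable (\<lambda>k. cmod (h k) * real k powr (- \<sigma>))"
proof (rule summable_comparison_test')
  show "summable (\<lambda>k. ((cmod (h k))\<^sup>2 + real k powr (- 2 * \<sigma>)) / 2)"
    using assms by (auto simp: H2_def summable_real_powr_iff intro!: summable_divide summable_add)
  show "norm (cmod (h k) * real k powr (- \<sigma>)) \<le> ((cmod (h k))\<^sup>2 + real k powr (- 2 * \<sigma>)) / 2" for k
    using sum_squares_bound[of "cmod (h k)" "real k powr (- \<sigma>)"]
    by (simp add: power2_eq_square powr_add[symmetric])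
qed

definition phi_series :: "(nat \<Rightarrow> complex) \<Rightarrow> complex \<Rightarrow> complex" where
  "phi_series h s = (\<Sum>k. h k * phi k s)"

lemma phi_holomorphic: "0 \<notin> S \<Longrightarrow> phi k holomorphic_on S"
  unfolding phi_def by (cases "k = 0") (auto intro!: holomorphic_intros)

lemma phi_series_holomorphic:
  assumes h: "h \<in> H2" and S: "open S" "1/2 < \<sigma>" "\<And>s. s \<in> S \<Longrightarrow> \<sigma> \<le> Re s \<and> cmod s \<le> R"
  shows "phi_series h holomorphic_on S"
proof -
  define M where "M k = (1 + R) / \<sigma> * (cmod (h k) * real k powr (- \<sigma>))" for k
  have M: "summable M"
    unfolding M_def using summable_H2_mult_powr[OF h S(2)] by (rule summable_mult)
  have bound: "\<forall>\<^sub>F k in sequentially. \<forall>s\<in>S. cmod (h k * phi k s) \<le> M k"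
  proof (intro eventually_sequentiallyI[of 1] ballI)
    fix k :: nat and s assume "k \<ge> 1" "s \<in> S"
    then have "cmod (phi k s) \<le> (1 + R) / \<sigma> * real k powr (- \<sigma>)"
      using S(2,3) by (intro norm_phi_le_uniform) auto
    then have "cmod (h k) * cmod (phi k s) \<le> cmod (h k) * ((1 + R) / \<sigma> * real k powr (- \<sigma>))"
      by (rule mult_left_mono) simp
    then show "cmod (h k * phi k s) \<le> M k"
      by (simp add: M_def norm_mult mult.left_commute)
  qed
  have deriv: "((\<lambda>s. h k * phi k s) has_field_derivative deriv (\<lambda>s. h k * phi k s) s) (at s)"
    if "s \<in> S" for k s
  proof (rule holomorphic_derivI[OF _ S(1) that])
    have "0 \<notin> S"
      using S by fastforce
    then show "(\<lambda>s. h k * phi k s) holomorphic_on S"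
      by (rule holomorphic_on_mult[OF holomorphic_on_const phi_holomorphic])
  qed
  obtain g g' where g: "\<forall>s\<in>S. (\<lambda>k. h k * phi k s) sums g s \<and>
      (\<lambda>k. deriv (\<lambda>s. h k * phi k s) s) sums g' s \<and> (g has_field_derivative g' s) (at s)"
    using series_and_derivative_comparison[OF S(1) M deriv bound] by blast
  have "(phi_series h has_field_derivative g' s) (at s)" if "s \<in> S" for s
  proof (rule has_field_derivative_transform_within_open[OF _ S(1) that])
    show "(g has_field_derivative g' s) (at s)"
      using g that by blast
    show "g x = phi_series h x" if "x \<in> S" for x
      using g that by (simp add: phi_series_def sums_iff)
  qed
  then show ?thesis
    using S(1) holomorphic_on_open by blast
qed

lemma phi_series_analytic:
  assumes "h \<in> H2"
  shows "phi_series h analytic_on {s. 1/2 < Re s}"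
  unfolding analytic_on_def
proof
  fix x assume "x \<in> {s. 1/2 < Re s}"
  define e where "e = (Re x - 1/2) / 2"
  have "e > 0" "1/2 < Re x - e" using \<open>x \<in> _\<close> by (simp_all add: e_def field_simps)
  moreover have "Re x - e \<le> Re s \<and> cmod s \<le> cmod x + e" if "s \<in> ball x e" for s
    using that abs_Re_le_cmod[of "s - x"] norm_triangle_ineq2[of s x]
    by (auto simp: dist_norm norm_minus_commute)
  then have "phi_series h holomorphic_on ball x e"
    using \<open>1/2 < Re x - e\<close> by (intro phi_series_holomorphic[OF assms]) auto
  ultimately show "\<exists>e>0. phi_series h holomorphic_on ball x e"
    by blast
qed

lemma phi_series_eq_0_if_zeros_accumulate:
  assumes h: "h \<in> H2" and Z: "Z \<subseteq> {s. 1/2 < Re s}" "z islimpt Z" "1/2 < Re z"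
    and zero: "\<And>s. s \<in> Z \<Longrightarrow> phi_series h s = 0" and w: "1/2 < Re w"
  shows "phi_series h w = 0"
proof (rule analytic_continuation[where f = "phi_series h" and S = "{s. 1/2 < Re s}" and U = Z and \<xi> = z and w = w])
  show "phi_series h holomorphic_on {s. 1/2 < Re s}"
    using phi_series_analytic[OF h] by (rule analytic_imp_holomorphic)
  show "open {s. 1/2 < Re s}"
    by (rule open_halfspace_Re_gt)
  show "connected {s. 1/2 < Re s}"
    by (intro convex_connected convex_halfspace_Re_gt)
qed (use Z zero w in auto)

lemma phi_series_cnj_eq_cnj_cinner_kappa:
  assumes "1/2 < Re s"
  shows "phi_series (\<lambda>k. cnj (ell2_coeff x k)) (cnj s) = cnj (cinner x (Abs_ell2 (kappa s)))"
proof -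
  have "(\<lambda>k. ell2_coeff x k * cnj (kappa s k)) sums cinner x (Abs_ell2 (kappa s))"
    using assms kappa_in_H2[OF assms]
    by (simp add: cinner_def Abs_ell2_inverse summable_sums H2_inner_summable ell2_coeff)
  then have "(\<lambda>k. cnj (ell2_coeff x k) * kappa s k) sums cnj (cinner x (Abs_ell2 (kappa s)))"
    using sums_cnj by fastforce
  then show ?thesis
    by (simp add: phi_series_def kappa_def sums_iff)
qed

section \<open>Uniqueness of Dirichlet series\<close>

lemma summable_inverse_Suc_power: "y \<ge> 2 \<Longrightarrow> summable (\<lambda>k. inverse (real (Suc k) ^ y))"
  using inverse_power_summable[of y, where 'a = real] summable_Suc_iff[of "\<lambda>k. inverse (real k ^ y)"]
  by simp

lemma summable_ratio_Suc_square: "summable (\<lambda>k. (real (Suc m) / real (Suc (k + m)))\<^sup>2)"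
proof (rule summable_comparison_test'[OF summable_mult[OF summable_inverse_Suc_power[OF order_refl]]])
  fix k
  have "(real (Suc k))\<^sup>2 \<le> (real (Suc (k + m)))\<^sup>2"
    by (intro power_mono) auto
  have "norm ((real (Suc m) / real (Suc (k + m)))\<^sup>2) = (real (Suc m))\<^sup>2 / (real (Suc (k + m)))\<^sup>2"
    by (simp add: power_divide)
  also have "\<dots> \<le> (real (Suc m))\<^sup>2 / (real (Suc k))\<^sup>2"
    using \<open>(real (Suc k))\<^sup>2 \<le> (real (Suc (k + m)))\<^sup>2\<close> by (intro divide_left_mono) auto
  also have "\<dots> = (real (Suc m))\<^sup>2 * inverse ((real (Suc k))\<^sup>2)"
    by (simp only: divide_inverse)
  finally show "norm ((real (Suc m) / real (Suc (k + m)))\<^sup>2) \<le> (real (Suc m))\<^sup>2 * inverse ((real (Suc k))\<^sup>2)" .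
qed

text \<open>By Tannery's theorem, as \<open>y \<rightarrow> \<infinity>\<close> only the leading term survives; the exponent is shifted
  by 2 so that \<open>B q\<^sub>k\<^sup>2\<close> is a summable majorant.\<close>

lemma dirichlet_series_shifted_tendsto_coeff:
  fixes b :: "nat \<Rightarrow> complex" and m :: nat
  assumes B: "\<And>k. cmod (b k) \<le> B"
  defines "q k \<equiv> real (Suc m) / real (Suc (k + m))"
  shows "(\<lambda>y. \<Sum>k. b (k + m) * of_real (q k ^ (y + 2))) \<longlonglongrightarrow> b m"
proof -
  have q: "0 \<le> q k" "q k \<le> 1" for k
    by (simp_all add: q_def)
  have "(\<lambda>y. \<Sum>k. b (k + m) * of_real (q k ^ (y + 2))) \<longlonglongrightarrow> (\<Sum>k. if k = 0 then b m else 0)"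
  proof (rule tannerys_theorem[THEN conjunct2, THEN conjunct2])
    show "(\<lambda>y. b (k + m) * of_real (q k ^ (y + 2))) \<longlonglongrightarrow> (if k = 0 then b m else 0)" for k
    proof (cases "k = 0")
      case False
      then have "q k < 1" by (simp add: q_def)
      then have "(\<lambda>y. q k ^ (y + 2)) \<longlonglongrightarrow> 0"
        using q[of k] by (intro LIMSEQ_ignore_initial_segment LIMSEQ_power_zero) auto
      then have "(\<lambda>y. complex_of_real (q k ^ (y + 2))) \<longlonglongrightarrow> of_real 0"
        by (rule tendsto_of_real)
      from tendsto_mult_right_zero[OF this[unfolded of_real_0], of "b (k + m)"] show ?thesis
        using False by simp
    qed (simp add: q_def)
    show "\<forall>\<^sub>F (k, y) in sequentially \<times>\<^sub>F sequentially. norm (b (k + m) * of_real (q k ^ (y + 2))) \<le> B * q k ^ 2"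
    proof (rule always_eventually, clarify)
      fix k y
      have "0 \<le> B"
        using B[of 0] norm_ge_zero[of "b 0"] by linarith
      moreover have "q k ^ (y + 2) \<le> q k ^ 2"
        using q[of k] by (intro power_decreasing) auto
      ultimately show "norm (b (k + m) * of_real (q k ^ (y + 2))) \<le> B * q k ^ 2"
        unfolding norm_mult norm_of_real using B[of "k + m"] q[of k] by (intro mult_mono) auto
    qed
    show "summable (\<lambda>k. B * q k ^ 2)"
      unfolding q_def by (intro summable_mult summable_ratio_Suc_square)
  qed simp
  then show ?thesis
    using sums_unique[OF sums_single[of 0 "\<lambda>_. b m"]] by simp
qed

lemma dirichlet_series_shifted_eq_0:
  fixes b :: "nat \<Rightarrow> complex"
  assumes B: "\<And>k. cmod (b k) \<le> B" and zero: "\<And>y. y \<ge> 2 \<Longrightarrow> (\<Sum>k. b k / of_nat (Suc k) ^ y) = 0"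
    and initial: "\<And>i. i < m \<Longrightarrow> b i = 0"
  shows "(\<Sum>k. b (k + m) * of_real ((real (Suc m) / real (Suc (k + m))) ^ (y + 2))) = 0"
proof -
  define t where "t k = b k / of_nat (Suc k) ^ (y + 2)" for k
  have t: "summable t"
  proof (rule summable_comparison_test')
    show "summable (\<lambda>k. B * inverse (real (Suc k) ^ (y + 2)))"
      by (intro summable_mult summable_inverse_Suc_power) simp
    show "norm (t k) \<le> B * inverse (real (Suc k) ^ (y + 2))" for k
      unfolding t_def divide_inverse norm_mult norm_inverse norm_power norm_of_nat
      using B[of k] by (rule mult_right_mono) simp
  qed
  have "suminf t = 0"
    unfolding t_def using zero[of "y + 2"] by simp
  moreover have "(\<Sum>i<m. t i) = 0"
    using initial by (simp add: t_def)
  ultimately have "(\<Sum>k. t (k + m)) = 0"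
    using suminf_split_initial_segment[OF t, of m] by simp
  moreover have "b (k + m) * of_real ((real (Suc m) / real (Suc (k + m))) ^ (y + 2))
      = of_nat (Suc m) ^ (y + 2) * t (k + m)" for k
    by (simp add: t_def power_divide del: of_nat_Suc)
  ultimately show ?thesis
    using suminf_mult[OF summable_ignore_initial_segment[OF t, of m], of "of_nat (Suc m) ^ (y + 2)"]
    by simp
qed

lemma dirichlet_series_eq_0_imp_coeff_eq_0:
  fixes b :: "nat \<Rightarrow> complex"
  assumes B: "\<And>k. cmod (b k) \<le> B" and zero: "\<And>y. y \<ge> 2 \<Longrightarrow> (\<Sum>k. b k / of_nat (Suc k) ^ y) = 0"
  shows "b m = 0"
proof (induction m rule: less_induct)
  case (less m)
  have "(\<lambda>y. \<Sum>k. b (k + m) * of_real ((real (Suc m) / real (Suc (k + m))) ^ (y + 2))) = (\<lambda>y. 0)"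
    using dirichlet_series_shifted_eq_0[where b = b and B = B, OF B zero less.IH] by simp
  then show ?case
    using dirichlet_series_shifted_tendsto_coeff[where b = b and B = B and m = m, OF B]
    by (simp add: LIMSEQ_const_iff)
qed

lemma phi_of_nat:
  assumes "y \<ge> 1"
  shows "phi k (of_nat (Suc y)) = - (1 / of_nat (Suc y)) * (inverse (of_nat (Suc k) ^ y) - inverse (of_nat k ^ y))"
proof -
  have "1 - (of_nat (Suc y) :: complex) = - of_nat y" by simp
  then have p: "(of_nat j :: complex) powr (1 - of_nat (Suc y)) = inverse (of_nat j ^ y)" for j
    using assms by (simp add: powr_minus powr_nat')
  show ?thesis
  proof (cases "k = 0")
    case False
    then show ?thesis unfolding phi_def using p[of "k + 1"] p[of k] by simp
  qed (use assms in \<open>simp add: phi_def\<close>)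
qed

lemma phi_series_of_nat:
  assumes B: "\<And>k. cmod (h k) \<le> B" and y: "y \<ge> 2"
  shows "phi_series h (of_nat (Suc y)) = - (1 / of_nat (Suc y)) * (\<Sum>k. (h k - h (Suc k)) / of_nat (Suc k) ^ y)"
proof -
  define a :: "nat \<Rightarrow> complex" where "a k = inverse (of_nat k ^ y)" for k
  define c :: complex where "c = - (1 / of_nat (Suc y))"
  have norm_a: "cmod (a k) = inverse (real k ^ y)" for k
    by (simp add: a_def norm_inverse norm_power)
  have s0: "summable (\<lambda>k. h k * a k)"
  proof (rule summable_comparison_test')
    show "summable (\<lambda>k. B * inverse (real k ^ y))"
      using y by (intro summable_mult inverse_power_summable)
    show "norm (h k * a k) \<le> B * inverse (real k ^ y)" for k
      unfolding norm_mult norm_a by (rule mult_right_mono[OF B]) simp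
  qed
  have s1: "summable (\<lambda>k. h k * a (Suc k))"
  proof (rule summable_comparison_test')
    show "summable (\<lambda>k. B * inverse (real (Suc k) ^ y))"
      using y by (intro summable_mult summable_inverse_Suc_power)
    show "norm (h k * a (Suc k)) \<le> B * inverse (real (Suc k) ^ y)" for k
      unfolding norm_mult norm_a by (rule mult_right_mono[OF B]) simp
  qed
  have "a 0 = 0" using y by (simp add: a_def)
  then have shift: "(\<Sum>k. h k * a k) = (\<Sum>k. h (Suc k) * a (Suc k))"
    using suminf_split_head[OF s0] by simp
  have "phi_series h (of_nat (Suc y)) = (\<Sum>k. c * (h k * a (Suc k) - h k * a k))"
    unfolding phi_series_def phi_of_nat[OF order_trans[OF one_le_numeral y]] a_def c_def
    by (simp add: algebra_simps)
  also have "\<dots> = c * ((\<Sum>k. h k * a (Suc k)) - (\<Sum>k. h k * a k))"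
    by (simp add: suminf_mult summable_diff[OF s1 s0] suminf_diff[OF s1 s0])
  also have "(\<Sum>k. h k * a (Suc k)) - (\<Sum>k. h k * a k) = (\<Sum>k. (h k - h (Suc k)) * a (Suc k))"
    unfolding shift using suminf_diff[OF s1 summable_Suc_iff[THEN iffD2, OF s0]]
    by (simp add: algebra_simps)
  finally show ?thesis
    by (simp add: a_def c_def divide_inverse)
qed

lemma H2_eq_0_if_phi_series_vanishes_at_nat:
  assumes h: "h \<in> H2" and zero: "\<And>y. y \<ge> 2 \<Longrightarrow> phi_series h (of_nat (Suc y)) = 0"
  shows "h k = 0"
proof -
  define B where "B = norm (Abs_ell2 h)"
  have B: "cmod (h k) \<le> B" for k
    using norm_ell2_coeff_le[of "Abs_ell2 h" k] h by (simp add: B_def Abs_ell2_inverse)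
  have "h k - h (Suc k) = 0" for k
  proof (rule dirichlet_series_eq_0_imp_coeff_eq_0[where b = "\<lambda>k. h k - h (Suc k)" and B = "2 * B"])
    show "cmod (h k - h (Suc k)) \<le> 2 * B" for k
      using norm_triangle_ineq4[of "h k" "h (Suc k)"] B[of k] B[of "Suc k"] by linarith
    show "(\<Sum>k. (h k - h (Suc k)) / of_nat (Suc k) ^ y) = 0" if "y \<ge> 2" for y
      using zero[OF that] phi_series_of_nat[where h = h, OF B that] by (simp del: of_nat_Suc)
  qed
  then have const: "h k = h 0" for k
    by (induction k) auto
  have "summable (\<lambda>k. (cmod (h k))\<^sup>2)"
    using h by (simp add: H2_def)
  then have "h 0 = 0"
    by (subst (asm) const) (simp add: summable_const_iff)
  then show ?thesis
    using const by simp
qed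

lemma ell2_eq_0_if_orthogonal_to_kappa:
  assumes Z: "Z \<subseteq> {s. 1/2 < Re s}" "z islimpt Z" "1/2 < Re z"
    and orth: "\<And>s. s \<in> Z \<Longrightarrow> cinner g (Abs_ell2 (kappa s)) = 0"
  shows "g = 0"
proof -
  define h where "h = (\<lambda>k. cnj (ell2_coeff g k))"
  have h: "h \<in> H2"
    using ell2_coeff[of g] by (simp add: H2_def h_def)
  have zeros: "phi_series h s = 0" if "s \<in> cnj ` Z" for s
    using that Z orth by (auto simp: h_def phi_series_cnj_eq_cnj_cinner_kappa)
  have limpt: "cnj z islimpt cnj ` Z"
    using Z(2) by (rule islimpt_isCont_image) (auto simp: eventually_at_filter)
  have "phi_series h s = 0" if "1/2 < Re s" for s
    by (rule phi_series_eq_0_if_zeros_accumulate[OF h _ limpt _ zeros]) (use Z(1,3) that in auto)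
  then have "h k = 0" for k
    by (rule H2_eq_0_if_phi_series_vanishes_at_nat[OF h]) simp
  then have "ell2_coeff g = ell2_coeff 0"
    by (simp add: fun_eq_iff h_def zero_ell2.rep_eq)
  then show ?thesis
    by (simp only: ell2_coeff_inject)
qed

lemma Re_s_param: "Re (s_param n \<alpha>) = 1"
  by (simp add: s_param_def)

lemma one_islimpt_s_param:
  assumes "n \<ge> 2"
  shows "1 islimpt range (s_param n)"
proof -
  define c where "c = pi / ln (real n)"
  have "c > 0" using assms by (simp add: c_def)
  define u where "u j = s_param n (1 / of_nat (Suc j))" for j
  have u: "u j = 1 + \<i> * of_real (c / real (Suc j))" for j
    unfolding u_def s_param_def c_def by (simp add: of_rat_divide del: of_nat_Suc)
  have "u j \<in> range (s_param n)" for j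
    unfolding u_def by (rule rangeI)
  moreover have "u j \<noteq> 1" for j
    using \<open>c > 0\<close> unfolding u by (simp add: complex_eq_iff)
  moreover have "(\<lambda>j. c / real (Suc j)) \<longlonglongrightarrow> 0"
    using tendsto_mult_right_zero[OF LIMSEQ_inverse_real_of_nat, of c] by (simp add: divide_inverse)
  then have "u \<longlonglongrightarrow> 1 + \<i> * of_real 0"
    unfolding u by (intro tendsto_intros)
  ultimately show ?thesis
    unfolding islimpt_sequential by (intro exI[of _ u]) auto
qed

theorem mainTheorem14:
  fixes n :: nat
  assumes "n \<ge> 2"
  shows "\<forall>f \<in> H2. \<forall>\<epsilon>>0. \<exists>A :: rat set. \<exists>c :: rat \<Rightarrow> complex. finite A \<and>
           H2_norm (\<lambda>k. f k - (\<Sum>\<alpha>\<in>A. c \<alpha> * kappa (s_param n \<alpha>) k)) < \<epsilon>"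
proof (intro ballI allI impI)
  fix f :: "nat \<Rightarrow> complex" and \<epsilon> :: real
  assume "f \<in> H2" "\<epsilon> > 0"
  show "\<exists>A c. finite A \<and> H2_norm (\<lambda>k. f k - (\<Sum>\<alpha>\<in>A. c \<alpha> * kappa (s_param n \<alpha>) k)) < \<epsilon>"
  proof (rule H2_approximation_if_orthogonal_complement_trivial)
    show "kappa (s_param n \<alpha>) \<in> H2" for \<alpha>
      by (rule kappa_in_H2) (simp add: Re_s_param)
    show "g = 0" if "\<And>\<alpha>. cinner g (Abs_ell2 (kappa (s_param n \<alpha>))) = 0" for g
      by (rule ell2_eq_0_if_orthogonal_to_kappa[of "range (s_param n)" 1])
        (use one_islimpt_s_param[OF assms] that in \<open>auto simp: Re_s_param\<close>)
  qed fact+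
qed

end
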